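(* Let $f_0\in C^\infty([0,\infty))$ be a monotone solution of \[ f''(y)+\left(\frac{2}{y}-\frac{y}{2}\right)f'(y)-\frac{1}{y^2}\sin(2f(y))=0\ \ (y>0),\qquad f(0)=0,\qquad \lim_{y\to\infty}f(y)\ \text{finite}, \] satisfying $\lVert f_0-\widetilde f_0\rVert\le 5\cdot10^{-4}$ (notation in the context), and let $\mathcal A_0$ denote the differential expression $\mathcal A_0 w=-\frac{1}{\rho}\partial_y(\rho\,\partial_yw)+\frac{2\cos(2f_0(y))}{y^2}w$ with $\rho(y)=y^2e^{-y^2/4}$. For $\lambda\in\mathbb R$ let $W_\lambda$ be the unique solution of the initial value problem $\mathcal A_0W_\lambda=\lambda W_\lambda$ on $(0,\infty)$, $W_\lambda(0)=0$, $W_\lambda'(0)=1$. If $\lambda\le -1$, then $W_\lambda$ has no zeros in $(0,\infty)$.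
   Context: Here $\widetilde f_0(y)=2\arctan\big(\sum_{n=0}^{14}(f_0)_nT_{2n+1}(y/\sqrt{2+y^2})\big)$ with $T_m$ the Chebyshev polynomials of the first kind and coefficients $(f_0)_0,\dots,(f_0)_{14}$ equal to $\frac{268245}{72878},\frac{-3174}{105551},\frac{1897}{97022},\frac{14}{72731},\frac{79}{119383},\frac{4}{66337},\frac{5}{109368},\frac{1}{109045},\frac{1}{204079},\frac{1}{675805},\frac{1}{1400761},\frac{1}{3586839},\frac{1}{7289041},\frac{1}{16940631},\frac{1}{59286294}$; $\lVert f\rVert=\lVert p_1f\rVert_{L^\infty(0,\infty)}+\lVert p_3f'\rVert_{L^\infty(0,\infty)}$ with $p_1(y)=\frac{\sqrt{2+y^2}}{\sqrt2\,y}$, $p_3(y)=\frac{(2+y^2)^{3/2}}{2\sqrt2}$. The initial conditions at the regular singular point $y=0$ mean $W_\lambda(y)=y+o(y)$ as $y\to0$. *)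

theory Defs
  imports "HOL-Analysis.Analysis"
begin

fun cheb_T :: "nat \<Rightarrow> real \<Rightarrow> real" where
  "cheb_T 0 x = 1"
| "cheb_T (Suc 0) x = x"
| "cheb_T (Suc (Suc n)) x = 2 * x * cheb_T (Suc n) x - cheb_T n x"

definition f0_coeffs :: "real list" where
  "f0_coeffs = [268245/72878, -3174/105551, 1897/97022, 14/72731, 79/119383,
     4/66337, 5/109368, 1/109045, 1/204079, 1/675805, 1/1400761, 1/3586839,
     1/7289041, 1/16940631, 1/59286294]"

definition f0_approx :: "real \<Rightarrow> real" where
  "f0_approx y = 2 * arctan (\<Sum>n<15. f0_coeffs ! n * cheb_T (2*n+1) (y / sqrt (2 + y^2)))"

definition p1 :: "real \<Rightarrow> real" where
  "p1 y = sqrt (2 + y^2) / (sqrt 2 * y)"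

definition p3 :: "real \<Rightarrow> real" where
  "p3 y = (2 + y^2) powr (3/2) / (2 * sqrt 2)"

text \<open>Weighted norm ||f|| = ||p1 f||_Linf(0,inf) + ||p3 f'||_Linf(0,inf) is at most eps
  (for the continuous functions considered, the essential sup is the sup over (0,inf)).\<close>
definition weighted_norm_le :: "(real \<Rightarrow> real) \<Rightarrow> real \<Rightarrow> bool" where
  "weighted_norm_le f eps \<longleftrightarrow>
     (\<exists>A B. A + B \<le> eps \<and> (\<forall>y>0. \<bar>p1 y * f y\<bar> \<le> A) \<and> (\<forall>y>0. \<bar>p3 y * deriv f y\<bar> \<le> B))"

definition smooth_on_nonneg :: "(real \<Rightarrow> real) \<Rightarrow> bool" where
  "smooth_on_nonneg f \<longleftrightarrow> (\<exists>D :: nat \<Rightarrow> real \<Rightarrow> real. D 0 = f \<and>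
     (\<forall>n y. y \<ge> 0 \<longrightarrow> (D n has_real_derivative D (Suc n) y) (at y within {0..})))"

definition rho :: "real \<Rightarrow> real" where
  "rho y = y^2 * exp (- (y^2) / 4)"

end

theory Submission
  imports Defs "HOL-Real_Asymp.Real_Asymp"
begin

(*
  The closeness of f0 to its Chebyshev approximation pins f0 down: 0 < f0 < pi,
  f0 > pi/2 on [1, inf) and f0'(0) >= 1/4. Together with the flux form
  (rho f0')' = exp (-y^2/4) sin (2 f0) of the profile equation this forces f0' > 0.

  Differentiating the profile equation shows that g y = y f0' y solves A0 g = -g, so g is
  a positive solution for the eigenvalue -1, vanishing linearly at 0.

  Sturm comparison of W = W_lambda with g: the weighted Wronskian Q = rho (W g' - W' g)
  satisfies Q' = (lambda + 1) rho W g <= 0 wherever W >= 0. At a first zero z of W we have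
  Q z = - rho z W' z g z >= 0, hence Q >= 0 on (0, z] and (W/g)' = - Q / (rho g^2) <= 0.
  If Q vanishes on (0, z), then W/g is constant there, contradicting W z = 0. Otherwise
  Q >= q > 0 near 0, and since rho g^2 = O(y^4) this makes W/g blow up at 0,
  contradicting W/g -> 1 / f0'(0).
*)

lemma cheb_T_cos: "cheb_T n (cos t) = cos (real n * t)"
proof -
  have "cheb_T n (cos t) = cos (real n * t) \<and> cheb_T (Suc n) (cos t) = cos (real (Suc n) * t)"
  proof (induction n)
    case (Suc n)
    have "cos (real (Suc (Suc n)) * t) = cos (real (Suc n) * t + t)"
      and "cos (real n * t) = cos (real (Suc n) * t - t)"
      by (simp_all add: algebra_simps)
    then have "cos (real (Suc (Suc n)) * t) = 2 * cos t * cos (real (Suc n) * t) - cos (real n * t)"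
      by (simp add: cos_add cos_diff)
    with Suc show ?case by simp
  qed auto
  then show ?thesis ..
qed

lemma abs_sin_of_nat_mult_le: "\<bar>sin (real m * s)\<bar> \<le> real m * \<bar>sin s\<bar>"
proof (induction m)
  case (Suc m)
  have "sin (real (Suc m) * s) = sin (real m * s) * cos s + cos (real m * s) * sin s"
    using sin_add[of "real m * s" s] by (simp add: algebra_simps)
  then have "\<bar>sin (real (Suc m) * s)\<bar> \<le> \<bar>sin (real m * s)\<bar> * \<bar>cos s\<bar> + \<bar>cos (real m * s)\<bar> * \<bar>sin s\<bar>"
    using abs_triangle_ineq[of "sin (real m * s) * cos s" "cos (real m * s) * sin s"]
    by (simp add: abs_mult)
  also have "\<dots> \<le> \<bar>sin (real m * s)\<bar> + \<bar>sin s\<bar>"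
    by (intro add_mono mult_right_le_one_le mult_left_le_one_le) auto
  also have "\<dots> \<le> real (Suc m) * \<bar>sin s\<bar>"
    using Suc by (simp add: algebra_simps)
  finally show ?case .
qed simp

lemma abs_cheb_T_le_one: "\<bar>x\<bar> \<le> 1 \<Longrightarrow> \<bar>cheb_T n x\<bar> \<le> 1"
proof -
  assume "\<bar>x\<bar> \<le> 1"
  then have "cos (arccos x) = x" by (simp add: abs_le_iff)
  then show ?thesis using cheb_T_cos[of n "arccos x"] abs_cos_le_one by metis
qed

lemma abs_cheb_T_odd_le:
  assumes "\<bar>x\<bar> \<le> 1"
  shows "\<bar>cheb_T (2 * k + 1) x\<bar> \<le> real (2 * k + 1) * \<bar>x\<bar>"
proof -
  \<comment> \<open>With \<open>x = sin s\<close>, \<open>T (2k+1) x = +/- sin ((2k+1) s)\<close>.\<close>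
  define s where "s = pi / 2 - arccos x"
  have x: "x = sin s"
    unfolding s_def using assms by (simp add: sin_diff abs_le_iff)
  have "cheb_T (2 * k + 1) x = cos (real (2 * k + 1) * (pi / 2 - s))"
    using cheb_T_cos[of "2 * k + 1" "arccos x"] assms by (simp add: s_def abs_le_iff)
  also have "\<dots> = cos (real (Suc (2 * k)) * pi / 2) * cos (real (2 * k + 1) * s)
      + sin (real (Suc (2 * k)) * pi / 2) * sin (real (2 * k + 1) * s)"
    by (simp add: right_diff_distrib cos_diff)
  also have "cos (real (Suc (2 * k)) * pi / 2) = 0"
    unfolding cos_zero_iff_int2 by (rule exI[of _ "int k"]) (simp add: algebra_simps)
  finally show ?thesis
    using abs_sin_of_nat_mult_le[of "2 * k + 1" s] x sin_cos_npi[of k] by (simp add: abs_mult)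
qed

definition f0_cheb_sum :: "real \<Rightarrow> real" where
  "f0_cheb_sum x = (\<Sum>n<15. f0_coeffs ! n * cheb_T (2 * n + 1) x)"

lemma f0_approx_eq: "f0_approx y = 2 * arctan (f0_cheb_sum (y / sqrt (2 + y^2)))"
  unfolding f0_approx_def f0_cheb_sum_def ..

lemma f0_cheb_sum_split:
  "f0_cheb_sum x = 268245/72878 * x + (\<Sum>n\<in>{1..<15}. f0_coeffs ! n * cheb_T (2 * n + 1) x)"
proof -
  have "f0_cheb_sum x = (\<Sum>n\<in>{0..<15}. f0_coeffs ! n * cheb_T (2 * n + 1) x)"
    unfolding f0_cheb_sum_def by (simp add: lessThan_atLeast0)
  also have "\<dots> = f0_coeffs ! 0 * cheb_T 1 x + (\<Sum>n\<in>{1..<15}. f0_coeffs ! n * cheb_T (2 * n + 1) x)"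
    by (subst sum.atLeast_Suc_lessThan) auto
  finally show ?thesis by (simp add: f0_coeffs_def)
qed

lemma f0_coeffs_tail_weighted_le: "(\<Sum>n\<in>{1..<15}. \<bar>f0_coeffs ! n\<bar> * real (2 * n + 1)) \<le> 1/5"
  unfolding atLeastLessThan_upt sum_set_upt_conv_sum_list_nat
  by (simp add: f0_coeffs_def upt_rec)

lemma f0_coeffs_tail_le: "(\<Sum>n\<in>{1..<15}. \<bar>f0_coeffs ! n\<bar>) \<le> 1/10"
  unfolding atLeastLessThan_upt sum_set_upt_conv_sum_list_nat
  by (simp add: f0_coeffs_def upt_rec)

lemma f0_cheb_sum_bounds:
  assumes "0 \<le> x" "x \<le> 1"
  shows "(268245/72878 - 1/5) * x \<le> f0_cheb_sum x" "\<bar>f0_cheb_sum x\<bar> \<le> 268245/72878 + 1/10"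
proof -
  let ?R = "\<Sum>n\<in>{1..<15}. f0_coeffs ! n * cheb_T (2 * n + 1) x"
  have x: "\<bar>x\<bar> \<le> 1" using assms by simp
  have "\<bar>?R\<bar> \<le> (\<Sum>n\<in>{1..<15}. \<bar>f0_coeffs ! n\<bar> * real (2 * n + 1) * x)"
    using abs_cheb_T_odd_le[OF x] assms
    by (intro order.trans[OF sum_abs] sum_mono) (simp add: abs_mult mult.assoc mult_left_mono)
  also have "\<dots> \<le> 1/5 * x"
    unfolding sum_distrib_right[symmetric]
    using f0_coeffs_tail_weighted_le assms by (intro mult_right_mono) auto
  finally have tail_lin: "\<bar>?R\<bar> \<le> 1/5 * x" .
  have "\<bar>?R\<bar> \<le> (\<Sum>n\<in>{1..<15}. \<bar>f0_coeffs ! n\<bar>)"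
    using abs_cheb_T_le_one[OF x]
    by (intro order.trans[OF sum_abs] sum_mono) (simp add: abs_mult mult_left_le)
  with f0_coeffs_tail_le have tail_const: "\<bar>?R\<bar> \<le> 1/10" by linarith
  show "(268245/72878 - 1/5) * x \<le> f0_cheb_sum x"
    using tail_lin f0_cheb_sum_split[of x] by (simp add: algebra_simps abs_le_iff)
  have "\<bar>f0_cheb_sum x\<bar> \<le> \<bar>268245/72878 * x\<bar> + \<bar>?R\<bar>"
    unfolding f0_cheb_sum_split by (rule abs_triangle_ineq)
  with tail_const assms show "\<bar>f0_cheb_sum x\<bar> \<le> 268245/72878 + 1/10" by simp
qed

lemma arctan_ge_div:
  assumes "0 \<le> u"
  shows "u / (1 + u^2) \<le> arctan u"
proof -
  let ?h = "\<lambda>u. arctan u - u / (1 + u^2)"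
  have "?h 0 \<le> ?h u"
  proof (rule DERIV_nonneg_imp_nondecreasing[OF assms])
    fix t :: real
    have nz: "1 + t^2 \<noteq> 0" by (smt (verit) zero_le_power2)
    have "(?h has_real_derivative inverse (1 + t^2) - ((1 + t^2) - t * (2 * t)) / (1 + t^2)^2) (at t)"
      using nz by (auto intro!: derivative_eq_intros simp: power2_eq_square)
    moreover have "inverse d - (d - t * (2 * t)) / d^2 = 2 * t^2 / d^2" if "d \<noteq> 0" for d
      using that by (simp add: field_simps power2_eq_square)
    ultimately show "\<exists>y. (?h has_real_derivative y) (at t) \<and> 0 \<le> y"
      using nz by fastforce
  qed
  then show ?thesis by simp
qed

lemma weighted_norm_le_imp_abs_le:
  assumes "weighted_norm_le f eps" "y > 0"
  shows "\<bar>f y\<bar> \<le> eps * sqrt 2 * (y / sqrt (2 + y^2))"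
proof -
  obtain A B where AB: "A + B \<le> eps" "\<forall>y>0. \<bar>p1 y * f y\<bar> \<le> A" "\<forall>y>0. \<bar>p3 y * deriv f y\<bar> \<le> B"
    using assms(1) unfolding weighted_norm_le_def by blast
  have "0 \<le> B" using AB(3)[rule_format, of 1] by linarith
  with AB have A: "\<bar>p1 y\<bar> * \<bar>f y\<bar> \<le> eps" using assms(2) by (force simp: abs_mult)
  have q: "sqrt (2 + y^2) > 0" by (simp add: add_pos_nonneg)
  have "\<bar>p1 y\<bar> = sqrt (2 + y^2) / (sqrt 2 * y)" using q assms(2) by (simp add: p1_def)
  with A q assms(2) show ?thesis by (simp add: field_simps)
qed

lemma div_sqrt_two_plus_sq_bounds:
  assumes "y > 0"
  shows "0 < y / sqrt (2 + y^2)" "y / sqrt (2 + y^2) < 1"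
proof -
  have q: "sqrt (2 + y^2) > 0" by (simp add: add_pos_nonneg)
  then show "0 < y / sqrt (2 + y^2)" using assms by simp
  have "y < sqrt (2 + y^2)" using assms by (intro real_less_rsqrt) simp
  with q show "y / sqrt (2 + y^2) < 1" by simp
qed

lemma profile_close_to_approx:
  assumes "weighted_norm_le (\<lambda>y. f y - f0_approx y) (5 / 10^4)" "y > 0"
  shows "\<bar>f y - 2 * arctan (f0_cheb_sum (y / sqrt (2 + y^2)))\<bar> \<le> 3/4000 * (y / sqrt (2 + y^2))"
proof -
  have "sqrt 2 \<le> 3/2" by (rule real_le_lsqrt) (auto simp: power2_eq_square)
  then have "5 / 10^4 * sqrt 2 * (y / sqrt (2 + y^2)) \<le> 3/4000 * (y / sqrt (2 + y^2))"
    using div_sqrt_two_plus_sq_bounds[OF assms(2)] by (intro mult_right_mono) auto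
  with weighted_norm_le_imp_abs_le[OF assms] show ?thesis by (simp add: f0_approx_eq)
qed

lemma profile_ge:
  assumes close: "weighted_norm_le (\<lambda>y. f y - f0_approx y) (5 / 10^4)" and y: "y > 0"
  shows "1/2 * (y / sqrt (2 + y^2)) \<le> f y"
proof -
  define x where "x = y / sqrt (2 + y^2)"
  define a :: real where "a = 268245/72878 - 1/5"
  have x: "0 < x" "x < 1" using div_sqrt_two_plus_sq_bounds[OF y] by (simp_all add: x_def)
  have a: "348/100 \<le> a" "a \<le> 349/100" by (simp_all add: a_def)
  have "a * x / (1 + a^2) \<le> a * x / (1 + (a * x)^2)"
    using a x by (intro divide_left_mono) (auto simp: power_mult_distrib mult_left_le power_le_one add_pos_nonneg)
  also have "\<dots> \<le> arctan (a * x)" using a x by (intro arctan_ge_div) simp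
  also have "\<dots> \<le> arctan (f0_cheb_sum x)"
    using f0_cheb_sum_bounds(1)[of x] x by (simp add: arctan_le_iff a_def)
  finally have at: "2 * (a / (1 + a^2)) * x \<le> 2 * arctan (f0_cheb_sum x)" by simp
  have "a^2 \<le> 349/100 * a" using a by (simp add: power2_eq_square mult_right_mono)
  then have "(1/2 + 3/4000) * (1 + a^2) \<le> 2 * a" using a by (simp add: algebra_simps)
  then have "1/2 + 3/4000 \<le> 2 * (a / (1 + a^2))" by (simp add: field_simps add_pos_nonneg)
  then have "(1/2 + 3/4000) * x \<le> 2 * (a / (1 + a^2)) * x" using x by (intro mult_right_mono) auto
  with at profile_close_to_approx[OF close y] show ?thesis unfolding x_def[symmetric] abs_le_iff
    by argo
qed

lemma profile_lt_pi:
  assumes close: "weighted_norm_le (\<lambda>y. f y - f0_approx y) (5 / 10^4)" and y: "y > 0"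
  shows "f y < pi"
proof -
  define x where "x = y / sqrt (2 + y^2)"
  define b :: real where "b = 268245/72878 + 1/10"
  have x: "0 < x" "x < 1" using div_sqrt_two_plus_sq_bounds[OF y] by (simp_all add: x_def)
  have "1/5 \<le> (1/4) / (109/100::real)" by simp
  also have "\<dots> \<le> (1/b) / (1 + (1/b)^2)"
    by (intro frac_le) (auto simp: b_def power2_eq_square add_pos_nonneg)
  also have "\<dots> \<le> arctan (1/b)" by (intro arctan_ge_div) (simp add: b_def)
  also have "\<dots> = pi/2 - arctan b" using arctan_inverse[of b] by (simp add: b_def inverse_eq_divide)
  finally have "arctan b \<le> pi/2 - 1/5" by simp
  moreover have "arctan (f0_cheb_sum x) \<le> arctan b"
    using f0_cheb_sum_bounds(2)[of x] x by (simp add: arctan_le_iff abs_le_iff b_def)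
  ultimately show ?thesis
    using profile_close_to_approx[OF close y] x unfolding x_def[symmetric] abs_le_iff by linarith
qed

lemma profile_gt_pi_half:
  assumes close: "weighted_norm_le (\<lambda>y. f y - f0_approx y) (5 / 10^4)" and y: "y \<ge> 1"
  shows "pi/2 < f y"
proof -
  define x where "x = y / sqrt (2 + y^2)"
  have y0: "y > 0" using y by simp
  have x: "0 < x" "x < 1" using div_sqrt_two_plus_sq_bounds[OF y0] by (simp_all add: x_def)
  have "1/3 \<le> y^2 / (2 + y^2)" using one_le_power[OF y, of 2] by (simp add: field_simps add_pos_nonneg)
  also have "\<dots> = x^2" by (simp add: x_def power_divide)
  finally have "(14/25)^2 \<le> x^2" by (simp add: power2_eq_square)
  then have "14/25 \<le> x" using x by (simp add: power_mono_iff)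
  then have "(268245/72878 - 1/5) * (14/25) \<le> (268245/72878 - 1/5) * x"
    by (intro mult_left_mono) auto
  then have "19/10 \<le> f0_cheb_sum x"
    using f0_cheb_sum_bounds(1)[of x] x by simp
  then have "arctan (19/10) \<le> arctan (f0_cheb_sum x)" by (simp add: arctan_le_iff)
  moreover have "arctan (10/19) = pi/2 - arctan (19/10)"
    using arctan_inverse[of "19/10"] by (simp add: inverse_eq_divide)
  moreover have "arctan (10/19) \<le> 10/19" by (rule arctan_le_self) simp
  ultimately show ?thesis
    using profile_close_to_approx[OF close y0] x pi_gt3 unfolding x_def[symmetric] abs_le_iff by linarith
qed

lemma rho_pos: "t > 0 \<Longrightarrow> rho t > 0"
  unfolding rho_def by simp

lemma rho_le_sq: "rho t \<le> t^2"
  unfolding rho_def by (intro mult_left_le) auto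

lemma rho_has_real_derivative: "(rho has_real_derivative exp (-(t^2)/4) * (2*t - t^3/2)) (at t)"
  unfolding rho_def
  by (auto intro!: derivative_eq_intros simp: algebra_simps power2_eq_square power3_eq_cube)

lemma profile_ode_flux_form:
  fixes f f1 f2 :: "real \<Rightarrow> real" and y :: real
  assumes "f2 y + (2/y - y/2) * f1 y - sin (2 * f y) / y^2 = 0" "y > 0"
  shows "y^2 * f2 y + (2*y - y^3/2) * f1 y = sin (2 * f y)"
proof -
  have "y^2 * f2 y + (2*y - y^3/2) * f1 y = y^2 * (f2 y + (2/y - y/2) * f1 y)"
    using assms(2) by (simp add: field_simps power2_eq_square power3_eq_cube)
  with assms show ?thesis by simp
qed

lemma profile_flux_has_real_derivative:
  fixes f f1 f2 :: "real \<Rightarrow> real" and y :: real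
  assumes "(f1 has_real_derivative f2 y) (at y)"
    and "f2 y + (2/y - y/2) * f1 y - sin (2 * f y) / y^2 = 0" "y > 0"
  shows "((\<lambda>t. rho t * f1 t) has_real_derivative exp (-(y^2)/4) * sin (2 * f y)) (at y)"
proof -
  have "((\<lambda>t. rho t * f1 t) has_real_derivative
      exp (-(y^2)/4) * (y^2 * f2 y + (2*y - y^3/2) * f1 y)) (at y)"
    using DERIV_mult[OF rho_has_real_derivative assms(1)] by (simp add: rho_def algebra_simps)
  then show ?thesis using profile_ode_flux_form[of f2 y f1 f, OF assms(2,3)] by simp
qed

lemma profile_ode_differentiated:
  fixes f f1 f2 f3 :: "real \<Rightarrow> real" and y :: real
  assumes d0: "\<forall>t>0. (f has_real_derivative f1 t) (at t)"
    and d1: "\<forall>t>0. (f1 has_real_derivative f2 t) (at t)"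
    and d2: "\<forall>t>0. (f2 has_real_derivative f3 t) (at t)"
    and ode: "\<forall>t>0. f2 t + (2/t - t/2) * f1 t - sin (2 * f t) / t^2 = 0"
    and y: "y > 0"
  shows "2*y*f2 y + y^2 * f3 y + (2 - 3*y^2/2) * f1 y + (2*y - y^3/2) * f2 y = 2 * cos (2 * f y) * f1 y"
proof -
  define E where "E t = t^2 * f2 t + (2*t - t^3/2) * f1 t - sin (2 * f t)" for t
  have dE: "(E has_real_derivative
      2*y*f2 y + y^2 * f3 y + (2 - 3*y^2/2) * f1 y + (2*y - y^3/2) * f2 y - 2 * cos (2 * f y) * f1 y) (at y)"
    unfolding E_def using d0[rule_format, OF y] d1[rule_format, OF y] d2[rule_format, OF y]
    by (auto intro!: derivative_eq_intros simp: algebra_simps power2_eq_square power3_eq_cube)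
  have E0: "E t = 0" if "t \<in> {0<..}" for t
    using profile_ode_flux_form[of f2 t f1 f] ode that unfolding E_def by simp
  have "((\<lambda>_. 0::real) has_real_derivative
      2*y*f2 y + y^2 * f3 y + (2 - 3*y^2/2) * f1 y + (2*y - y^3/2) * f2 y - 2 * cos (2 * f y) * f1 y) (at y)"
    by (rule has_field_derivative_transform_within_open[OF dE, of "{0<..}"]) (use y E0 in auto)
  then have "2*y*f2 y + y^2 * f3 y + (2 - 3*y^2/2) * f1 y + (2*y - y^3/2) * f2 y
      - 2 * cos (2 * f y) * f1 y = 0"
    by (rule DERIV_unique[OF _ DERIV_const])
  then show ?thesis by simp
qed

text \<open>That is, \<open>g y = y * f' y\<close> solves \<open>A0 g = - g\<close>, where
  \<open>A0 w = - (rho w')' / rho + 2 cos (2 f) / y^2 * w\<close>.\<close>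
lemma dilation_mode_flux_has_real_derivative:
  fixes f f1 f2 f3 :: "real \<Rightarrow> real" and y :: real
  assumes d0: "\<forall>t>0. (f has_real_derivative f1 t) (at t)"
    and d1: "\<forall>t>0. (f1 has_real_derivative f2 t) (at t)"
    and d2: "\<forall>t>0. (f2 has_real_derivative f3 t) (at t)"
    and ode: "\<forall>t>0. f2 t + (2/t - t/2) * f1 t - sin (2 * f t) / t^2 = 0"
    and y: "y > 0"
  shows "((\<lambda>t. rho t * (f1 t + t * f2 t)) has_real_derivative
           rho y * (2 * cos (2 * f y) / y^2 + 1) * (y * f1 y)) (at y)"
proof -
  have deriv: "((\<lambda>t. rho t * (f1 t + t * f2 t)) has_real_derivative
      rho y * (f2 y + (f2 y + y * f3 y)) + exp (-(y^2)/4) * (2*y - y^3/2) * (f1 y + y * f2 y)) (at y)"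
    using d1[rule_format, OF y] d2[rule_format, OF y]
    by (intro DERIV_mult' rho_has_real_derivative) (auto intro!: derivative_eq_intros)
  have ode_diff: "y^2 * f3 y = 2 * cos (2 * f y) * f1 y - 2*y*f2 y - (2 - 3*y^2/2) * f1 y
      - (2*y - y^3/2) * f2 y"
    using profile_ode_differentiated[OF d0 d1 d2 ode y] by linarith
  have "rho y * (f2 y + (f2 y + y * f3 y)) + exp (-(y^2)/4) * (2*y - y^3/2) * (f1 y + y * f2 y)
      = exp (-(y^2)/4) * (2 * y^2 * f2 y + y * (y^2 * f3 y) + (2*y - y^3/2) * (f1 y + y * f2 y))"
    by (simp add: rho_def algebra_simps power2_eq_square)
  also have "\<dots> = exp (-(y^2)/4) * (2 * cos (2 * f y) + y^2) * (y * f1 y)"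
    unfolding ode_diff by (simp add: field_simps power2_eq_square power3_eq_cube)
  also have "\<dots> = rho y * (2 * cos (2 * f y) / y^2 + 1) * (y * f1 y)"
    using y by (simp add: rho_def field_simps)
  finally show ?thesis using deriv by simp
qed

lemma wronskian_has_real_derivative:
  fixes u du v dv p q :: "real \<Rightarrow> real"
  assumes "(u has_real_derivative du y) (at y)" "(v has_real_derivative dv y) (at y)"
    and "((\<lambda>t. p t * du t) has_real_derivative p y * (q y - a) * u y) (at y)"
    and "((\<lambda>t. p t * dv t) has_real_derivative p y * (q y - b) * v y) (at y)"
  shows "((\<lambda>t. p t * (u t * dv t - du t * v t)) has_real_derivative (a - b) * p y * u y * v y) (at y)"
proof -
  have "((\<lambda>t. u t * (p t * dv t) - p t * du t * v t) has_real_derivative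
      u y * (p y * (q y - b) * v y) + du y * (p y * dv y)
      - (p y * du y * dv y + p y * (q y - a) * u y * v y)) (at y)"
    by (rule DERIV_diff[OF DERIV_mult'[OF assms(1,4)] DERIV_mult'[OF assms(3,2)]])
  moreover have "(\<lambda>t. u t * (p t * dv t) - p t * du t * v t) = (\<lambda>t. p t * (u t * dv t - du t * v t))"
    by (simp add: fun_eq_iff algebra_simps)
  ultimately show ?thesis by (simp add: algebra_simps)
qed

text \<open>A zero of \<open>f'\<close> at \<open>y0\<close> is a minimum of \<open>f'\<close>, so the equation forces \<open>f y0 = pi/2\<close>.
  Beyond \<open>y0\<close> the flux \<open>rho f'\<close> is then nonincreasing, so \<open>f\<close> cannot rise above
  \<open>pi/2\<close>, contradicting \<open>f > pi/2\<close> on \<open>[1, \<infinity>)\<close>.\<close>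
lemma profile_deriv_pos:
  fixes f f1 f2 :: "real \<Rightarrow> real"
  assumes d0: "\<forall>t>0. (f has_real_derivative f1 t) (at t)"
    and d1: "\<forall>t>0. (f1 has_real_derivative f2 t) (at t)"
    and ode: "\<forall>t>0. f2 t + (2/t - t/2) * f1 t - sin (2 * f t) / t^2 = 0"
    and mono: "mono_on {0..} f"
    and f_pos: "\<forall>t>0. 0 < f t" and f_lt_pi: "\<forall>t>0. f t < pi" and f_gt: "\<forall>t\<ge>1. pi/2 < f t"
    and y0: "y0 > 0"
  shows "f1 y0 > 0"
proof (rule ccontr)
  have f1_nonneg: "0 \<le> f1 t" if "t > 0" for t
    using mono_on_imp_deriv_nonneg[OF mono d0[rule_format, OF that]] that by simp
  assume "\<not> f1 y0 > 0"
  with f1_nonneg y0 have z: "f1 y0 = 0" by force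
  have "f2 y0 = 0"
  proof (rule DERIV_local_min[OF d1[rule_format, OF y0] y0])
    show "\<forall>y. \<bar>y0 - y\<bar> < y0 \<longrightarrow> f1 y0 \<le> f1 y" using z f1_nonneg by (auto simp: abs_less_iff)
  qed
  with ode[rule_format, OF y0] z have "sin (2 * f y0) / y0^2 = 0" by simp
  with y0 have "sin (2 * f y0) = 0" by simp
  then obtain i :: int where i: "2 * f y0 = of_int i * pi" by (auto simp: sin_zero_iff_int2)
  have "0 < f y0" "f y0 < pi" using f_pos f_lt_pi y0 by auto
  with i have "0 < of_int i * pi" "of_int i * pi < 2 * pi" by linarith+
  then have "i = 1" by (simp add: zero_less_mult_iff)
  with i have f_y0: "f y0 = pi/2" by simp
  have flux_le: "rho t * f1 t \<le> rho y0 * f1 y0" if "y0 \<le> t" for t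
  proof (rule DERIV_nonpos_imp_nonincreasing[OF that])
    fix s assume s: "y0 \<le> s" "s \<le> t"
    then have "pi/2 \<le> f s" "f s < pi"
      using mono_onD[OF mono, of y0 s] f_y0 f_lt_pi y0 by auto
    then have "exp (-(s^2)/4) * sin (2 * f s) \<le> 0"
      by (intro mult_nonneg_nonpos sin_le_zero) auto
    moreover have "s > 0" using s y0 by simp
    ultimately show "\<exists>y. ((\<lambda>t. rho t * f1 t) has_real_derivative y) (at s) \<and> y \<le> 0"
      using profile_flux_has_real_derivative[of f1 f2 s f] d1 ode by blast
  qed
  have f1_nonpos: "f1 t \<le> 0" if "y0 \<le> t" for t
    using flux_le[OF that] z rho_pos[of t] that y0 by (simp add: mult_le_0_iff)
  have "f (max y0 1) \<le> f y0"
  proof (rule DERIV_nonpos_imp_nonincreasing[of y0 "max y0 1"])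
    fix t assume t: "y0 \<le> t" "t \<le> max y0 1"
    with y0 have "t > 0" by simp
    with d0 f1_nonpos[OF t(1)] show "\<exists>y. (f has_real_derivative y) (at t) \<and> y \<le> 0" by blast
  qed simp
  with f_gt f_y0 show False by (metis max.cobounded2 not_le)
qed

lemma profile_deriv_at_zero_ge:
  fixes f :: "real \<Rightarrow> real"
  assumes "(f has_real_derivative D) (at 0 within {0..})" "f 0 = 0"
    and close: "weighted_norm_le (\<lambda>y. f y - f0_approx y) (5 / 10^4)"
  shows "1/4 \<le> D"
proof (rule tendsto_lowerbound)
  have "((\<lambda>y. f y / y) \<longlongrightarrow> D) (at 0 within {0..})"
    using assms(1,2) unfolding has_field_derivative_iff by simp
  then show "((\<lambda>y. f y / y) \<longlongrightarrow> D) (at_right 0)"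
    by (rule tendsto_within_subset) auto
  show "\<forall>\<^sub>F y in at_right 0. 1/4 \<le> f y / y"
    unfolding eventually_at_right_field
  proof (intro exI[of _ 1] conjI allI impI)
    fix y :: real assume y: "0 < y" "y < 1"
    have "y^2 \<le> 1" using y by (simp add: power_le_one)
    then have "sqrt (2 + y^2) \<le> 2" by (intro real_le_lsqrt) auto
    then have "y / 2 \<le> y / sqrt (2 + y^2)"
      using y by (intro divide_left_mono) (auto simp: add_pos_nonneg)
    with profile_ge[OF close y(1)] have "y / 4 \<le> f y" by linarith
    with y show "1/4 \<le> f y / y" by (simp add: field_simps)
  qed simp
qed simp

lemma first_zero:
  fixes W :: "real \<Rightarrow> real"
  assumes cont: "\<And>t. t > 0 \<Longrightarrow> isCont W t"
    and pos_near_0: "\<forall>\<^sub>F t in at_right 0. W t > 0"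
    and y: "y > 0" "W y = 0"
  obtains z where "z > 0" "W z = 0" "\<And>t. 0 < t \<Longrightarrow> t < z \<Longrightarrow> W t > 0"
proof -
  obtain \<delta> where \<delta>: "\<delta> > 0" "\<And>t. 0 < t \<Longrightarrow> t < \<delta> \<Longrightarrow> W t > 0"
    using pos_near_0 unfolding eventually_at_right_field by auto
  define a where "a = min (\<delta>/2) (y/2)"
  have a: "0 < a" "a < \<delta>" "a < y" using \<delta> y unfolding a_def by auto
  define S where "S = {t \<in> {a..y}. W t = 0}"
  have "closed S"
    unfolding S_def using a cont
    by (intro continuous_closed_preimage_constant continuous_at_imp_continuous_on) auto
  moreover have "y \<in> S" "bdd_below S" using a y by (auto simp: S_def bdd_below_def)
  ultimately have z: "Inf S \<in> S" by (intro closed_contains_Inf) auto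
  then have a_le: "a \<le> Inf S" and W_Inf: "W (Inf S) = 0" by (simp_all add: S_def)
  have pos: "W t > 0" if t: "0 < t" "t < Inf S" for t
  proof (cases "t < a")
    case True
    with a t show ?thesis by (intro \<delta>(2)) simp_all
  next
    case False
    show ?thesis
    proof (rule ccontr)
      assume "\<not> W t > 0"
      moreover have "0 < W a" using \<delta>(2)[of a] a by simp
      moreover have "\<forall>s. a \<le> s \<and> s \<le> t \<longrightarrow> isCont W s" using a cont by simp
      ultimately obtain s where s: "a \<le> s" "s \<le> t" "W s = 0"
        using IVT2[of W t 0 a] False by fastforce
      with z t have "s \<in> S" by (simp add: S_def)
      then have "Inf S \<le> s" using \<open>bdd_below S\<close> by (rule cInf_lower)
      with s t show False by simp
    qed
  qed
  show thesis
  proof (rule that)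
    show "0 < Inf S" using a a_le by simp
  qed (fact W_Inf, fact pos)
qed

lemma deriv_nonpos_at_first_zero:
  fixes W :: "real \<Rightarrow> real"
  assumes "(W has_real_derivative D) (at z)" "z > 0" "W z = 0"
    and "\<And>t. 0 < t \<Longrightarrow> t < z \<Longrightarrow> W t > 0"
  shows "D \<le> 0"
proof (rule ccontr)
  assume "\<not> D \<le> 0"
  then obtain d where "d > 0" and d: "\<And>h. 0 < h \<Longrightarrow> h < d \<Longrightarrow> W (z - h) < W z"
    using DERIV_pos_inc_left[OF assms(1)] by force
  define h where "h = min d z / 2"
  have "0 < h" "h < d" "h < z" using \<open>d > 0\<close> assms(2) by (auto simp: h_def)
  with assms(3) d[of h] assms(4)[of "z - h"] show False by simp
qed

lemma filterlim_at_top_at_right_0_of_deriv_le: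
  fixes v v' :: "real \<Rightarrow> real"
  assumes "b > 0" "K > 0"
    and v: "\<And>t. 0 < t \<Longrightarrow> t \<le> b \<Longrightarrow> (v has_real_derivative v' t) (at t)"
    and v'_le: "\<And>t. 0 < t \<Longrightarrow> t \<le> b \<Longrightarrow> v' t \<le> - K / t^4"
  shows "filterlim v at_top (at_right 0)"
proof -
  define H where "H t = v t - K / (3 * t^3)" for t
  have "H b \<le> H t" if t: "0 < t" "t \<le> b" for t
  proof (rule DERIV_nonpos_imp_nonincreasing[OF t(2)])
    fix s assume s: "t \<le> s" "s \<le> b"
    then have "(H has_real_derivative v' s + K / s^4) (at s)"
      unfolding H_def using v[of s] t
      by (auto intro!: derivative_eq_intros simp: field_simps power_eq_if)
    moreover have "v' s + K / s^4 \<le> 0" using v'_le[of s] s t by simp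
    ultimately show "\<exists>y. (H has_real_derivative y) (at s) \<and> y \<le> 0" by blast
  qed
  then have "\<forall>\<^sub>F t in at_right 0. H b + K / (3 * t^3) \<le> v t"
    unfolding eventually_at_right_field H_def using \<open>b > 0\<close> by force
  moreover have "filterlim (\<lambda>t. H b + K / (3 * t^3)) at_top (at_right 0)"
    using \<open>K > 0\<close> by real_asymp
  ultimately show ?thesis by (rule filterlim_at_top_mono[rotated])
qed

lemma filterlim_at_top_at_right_0_of_pos_wronskian:
  fixes v Q w :: "real \<Rightarrow> real"
  assumes "s > 0" "0 < Q s"
    and v: "\<And>t. t > 0 \<Longrightarrow> (v has_real_derivative - Q t / w t) (at t)"
    and Q_ge: "\<And>t. 0 < t \<Longrightarrow> t \<le> s \<Longrightarrow> Q s \<le> Q t"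
    and w_pos: "\<And>t. t > 0 \<Longrightarrow> 0 < w t"
    and w_le: "\<forall>\<^sub>F t in at_right 0. w t \<le> C * t^4" and "C > 0"
  shows "filterlim v at_top (at_right 0)"
proof -
  obtain \<eta> where \<eta>: "\<eta> > 0" "\<And>t. 0 < t \<Longrightarrow> t < \<eta> \<Longrightarrow> w t \<le> C * t^4"
    using w_le unfolding eventually_at_right_field by auto
  define b where "b = min s (\<eta>/2)"
  have b: "0 < b" "b \<le> s" "b < \<eta>" using \<open>s > 0\<close> \<eta> by (auto simp: b_def)
  have "- Q t / w t \<le> - (Q s / C) / t^4" if t: "0 < t" "t \<le> b" for t
  proof -
    have "Q s / (C * t^4) \<le> Q t / w t"
      using Q_ge[of t] w_pos[of t] \<eta>(2)[of t] t b \<open>0 < Q s\<close> by (intro frac_le) auto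
    then show ?thesis by simp
  qed
  with b \<open>0 < Q s\<close> \<open>C > 0\<close> v show ?thesis
    by (intro filterlim_at_top_at_right_0_of_deriv_le[of b "Q s / C"]) auto
qed

lemma quotient_has_real_derivative_wronskian:
  fixes W dW g dg p :: "real \<Rightarrow> real"
  assumes "(W has_real_derivative dW t) (at t)" "(g has_real_derivative dg t) (at t)"
    and "g t \<noteq> 0" "p t \<noteq> 0"
  shows "((\<lambda>t. W t / g t) has_real_derivative
           - (p t * (W t * dg t - dW t * g t)) / (p t * (g t)^2)) (at t)"
proof -
  have "((\<lambda>t. W t / g t) has_real_derivative (dW t * g t - W t * dg t) / (g t * g t)) (at t)"
    using assms by (intro DERIV_divide) auto
  moreover have "(dW t * g t - W t * dg t) / (g t * g t)
      = - (p t * (W t * dg t - dW t * g t)) / (p t * (g t)^2)"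
    using assms(3,4) by (simp add: power2_eq_square field_simps)
  ultimately show ?thesis by simp
qed

lemma sturm_comparison_no_zero:
  fixes W dW g dg p :: "real \<Rightarrow> real" and c C L y :: real
  assumes W: "\<And>t. t > 0 \<Longrightarrow> (W has_real_derivative dW t) (at t)"
    and g: "\<And>t. t > 0 \<Longrightarrow> (g has_real_derivative dg t) (at t)"
    and g_pos: "\<And>t. t > 0 \<Longrightarrow> g t > 0" and p_pos: "\<And>t. t > 0 \<Longrightarrow> p t > 0"
    and wronskian: "\<And>t. t > 0 \<Longrightarrow>
      ((\<lambda>t. p t * (W t * dg t - dW t * g t)) has_real_derivative c * p t * W t * g t) (at t)"
    and "c \<le> 0"
    and W_pos_near_0: "\<forall>\<^sub>F t in at_right 0. W t > 0"
    and quotient_tendsto: "((\<lambda>t. W t / g t) \<longlongrightarrow> L) (at_right 0)"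
    and weight_bound: "\<forall>\<^sub>F t in at_right 0. p t * (g t)^2 \<le> C * t^4" and "C > 0"
    and "y > 0"
  shows "W y \<noteq> 0"
proof
  assume "W y = 0"
  with W W_pos_near_0 \<open>y > 0\<close> obtain z where z: "z > 0" "W z = 0" and W_pos: "\<And>t. 0 < t \<Longrightarrow> t < z \<Longrightarrow> W t > 0"
    by (metis DERIV_isCont first_zero)
  define Q where "Q t = p t * (W t * dg t - dW t * g t)" for t
  have "dW z \<le> 0" using deriv_nonpos_at_first_zero[OF W[OF z(1)] z W_pos] .
  then have Q_z: "0 \<le> Q z"
    using z p_pos[of z] g_pos[of z]
    by (simp add: Q_def mult_nonneg_nonpos mult_nonpos_nonneg less_imp_le)
  have Q_antitone: "Q s \<le> Q t" if "0 < t" "t \<le> s" "s \<le> z" for s t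
  proof (rule DERIV_nonpos_imp_nonincreasing[OF that(2)])
    fix u assume u: "t \<le> u" "u \<le> s"
    with that have "0 < u" "0 \<le> W u" using W_pos[of u] z by (cases "u = z"; auto)+
    with \<open>c \<le> 0\<close> p_pos[of u] g_pos[of u] have "c * p u * W u * g u \<le> 0"
      by (simp add: mult_nonpos_nonneg)
    with wronskian[OF \<open>0 < u\<close>] show "\<exists>D. (Q has_real_derivative D) (at u) \<and> D \<le> 0"
      unfolding Q_def by blast
  qed
  have quotient: "((\<lambda>t. W t / g t) has_real_derivative - Q t / (p t * (g t)^2)) (at t)" if "t > 0" for t
    unfolding Q_def using W[OF that] g[OF that] g_pos[OF that] p_pos[OF that]
    by (intro quotient_has_real_derivative_wronskian) auto
  show False
  proof (cases "Q (z/2) > 0")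
    case True
    have "filterlim (\<lambda>t. W t / g t) at_top (at_right 0)"
    proof (rule filterlim_at_top_at_right_0_of_pos_wronskian[OF _ True quotient _ _ weight_bound \<open>C > 0\<close>])
      show "Q (z/2) \<le> Q t" if "0 < t" "t \<le> z/2" for t using Q_antitone[of t "z/2"] that z by simp
      show "0 < p t * (g t)^2" if "t > 0" for t using p_pos[OF that] g_pos[OF that] by simp
    qed (use z in simp)
    with quotient_tendsto show False
      by (meson filterlim_at_top_imp_at_infinity not_tendsto_and_filterlim_at_infinity trivial_limit_at_right_real)
  next
    case False
    have Q_zero: "Q t = 0" if "z/2 \<le> t" "t \<le> z" for t
    proof -
      have "Q z \<le> Q t" "Q t \<le> Q (z/2)"
        using Q_antitone[of t z] Q_antitone[of "z/2" t] that z by simp_all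
      with False Q_z show ?thesis by linarith
    qed
    have "W (z/2) / g (z/2) \<le> W z / g z"
    proof (rule DERIV_nonneg_imp_nondecreasing[of "z/2" z])
      fix t assume t: "z/2 \<le> t" "t \<le> z"
      with z quotient[of t] Q_zero[OF t]
      show "\<exists>D. ((\<lambda>t. W t / g t) has_real_derivative D) (at t) \<and> 0 \<le> D" by auto
    qed (use z in simp)
    with z W_pos[of "z/2"] g_pos[of "z/2"] show False by (simp add: divide_le_0_iff)
  qed
qed

lemma sturm_comparison_no_zero_of_linear_at_0:
  fixes W dW g dg p :: "real \<Rightarrow> real" and c C \<alpha> \<gamma> y :: real
  assumes W: "\<And>t. t > 0 \<Longrightarrow> (W has_real_derivative dW t) (at t)"
    and g: "\<And>t. t > 0 \<Longrightarrow> (g has_real_derivative dg t) (at t)"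
    and g_pos: "\<And>t. t > 0 \<Longrightarrow> g t > 0" and p_pos: "\<And>t. t > 0 \<Longrightarrow> p t > 0"
    and wronskian: "\<And>t. t > 0 \<Longrightarrow>
      ((\<lambda>t. p t * (W t * dg t - dW t * g t)) has_real_derivative c * p t * W t * g t) (at t)"
    and "c \<le> 0"
    and W_lin: "((\<lambda>t. W t / t) \<longlongrightarrow> \<alpha>) (at_right 0)" "\<alpha> > 0"
    and g_lin: "((\<lambda>t. g t / t) \<longlongrightarrow> \<gamma>) (at_right 0)" "\<gamma> > 0"
    and p_le: "\<And>t. t > 0 \<Longrightarrow> p t \<le> C * t^2"
    and "y > 0"
  shows "W y \<noteq> 0"
proof (rule sturm_comparison_no_zero[where L = "\<alpha> / \<gamma>" and C = "C * (\<gamma> + 1)^2",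
      OF W g g_pos p_pos wronskian \<open>c \<le> 0\<close> _ _ _ _ \<open>y > 0\<close>])
  show "\<forall>\<^sub>F t in at_right 0. W t > 0"
    using order_tendstoD(1)[OF W_lin] eventually_at_right_less
    by eventually_elim (simp add: zero_less_divide_iff)
  have "\<forall>\<^sub>F t in at_right 0. (W t / t) / (g t / t) = W t / g t"
    using eventually_at_right_less[of 0] by eventually_elim simp
  with tendsto_divide[OF W_lin(1) g_lin(1)] \<open>\<gamma> > 0\<close>
  show "((\<lambda>t. W t / g t) \<longlongrightarrow> \<alpha> / \<gamma>) (at_right 0)"
    by (auto elim: Lim_transform_eventually)
  show "\<forall>\<^sub>F t in at_right 0. p t * (g t)^2 \<le> C * (\<gamma> + 1)^2 * t^4"
    using order_tendstoD(2)[OF g_lin(1) less_add_one] eventually_at_right_less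
  proof eventually_elim
    case (elim t)
    then have "0 < g t / t" "0 < p t" "p t \<le> C * t^2"
      using g_pos[of t] p_pos[of t] p_le[of t] by simp_all
    with elim have "p t * (g t / t)^2 \<le> C * t^2 * (\<gamma> + 1)^2"
      by (intro mult_mono power_mono) auto
    then show ?case using elim by (simp add: power_divide field_simps power2_eq_square power4_eq_xxxx)
  qed
  have "0 < p 1" "p 1 \<le> C" using p_pos[of 1] p_le[of 1] by simp_all
  then show "0 < C * (\<gamma> + 1)^2" using \<open>\<gamma> > 0\<close> by simp
qed

lemma smooth_on_nonneg_obtain_derivatives:
  assumes "smooth_on_nonneg f"
  obtains D where "D 0 = f"
    and "\<And>n t. t > 0 \<Longrightarrow> (D n has_real_derivative D (Suc n) t) (at t)"
    and "\<And>n. (D n has_real_derivative D (Suc n) 0) (at 0 within {0..})"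
proof -
  obtain D where D0: "D 0 = f"
    and D: "\<And>n y. y \<ge> 0 \<Longrightarrow> (D n has_real_derivative D (Suc n) y) (at y within {0..})"
    using assms unfolding smooth_on_nonneg_def by blast
  have at_pos: "(D n has_real_derivative D (Suc n) t) (at t)" if "t > 0" for n t
  proof -
    have "(D n has_real_derivative D (Suc n) t) (at t within {0<..})"
      by (rule DERIV_subset[OF D]) (use that in auto)
    with that show ?thesis using at_within_open[of t "{0<..}"] by simp
  qed
  have at_0: "(D n has_real_derivative D (Suc n) 0) (at 0 within {0..})" for n
    by (rule D) simp
  show thesis by (rule that[OF D0 at_pos at_0])
qed

lemma deriv_eq_of_has_real_derivative_on_pos:
  fixes f f1 f2 :: "real \<Rightarrow> real"
  assumes d0: "\<forall>t>0. (f has_real_derivative f1 t) (at t)"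
    and d1: "\<forall>t>0. (f1 has_real_derivative f2 t) (at t)" and "t > 0"
  shows "deriv f t = f1 t" "deriv (deriv f) t = f2 t"
proof -
  have deriv_f: "deriv f s = f1 s" if "s > 0" for s
    using DERIV_imp_deriv[of f "f1 s" s] d0 that by auto
  then show "deriv f t = f1 t" using \<open>t > 0\<close> .
  show "deriv (deriv f) t = f2 t"
  proof (rule DERIV_imp_deriv, rule has_field_derivative_transform_within_open)
    show "(f1 has_real_derivative f2 t) (at t)" using d1 \<open>t > 0\<close> by blast
    show "f1 s = deriv f s" if "s \<in> {0<..}" for s using deriv_f that by simp
  qed (use \<open>t > 0\<close> in auto)
qed

lemma profile_dilation_mode:
  fixes f :: "real \<Rightarrow> real"
  assumes smooth: "smooth_on_nonneg f"
    and mono: "mono_on {0..} f \<or> antimono_on {0..} f"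
    and ode: "\<forall>y>0. deriv (deriv f) y + (2 / y - y / 2) * deriv f y - sin (2 * f y) / y^2 = 0"
    and f_0: "f 0 = 0"
    and close: "weighted_norm_le (\<lambda>y. f y - f0_approx y) (5 / 10^4)"
  obtains f1 f2 where
    "\<And>t. t > 0 \<Longrightarrow> (f1 has_real_derivative f2 t) (at t)"
    "\<And>t. t > 0 \<Longrightarrow> 0 < f1 t" "0 < f1 0" "(f1 \<longlongrightarrow> f1 0) (at_right 0)"
    "\<And>t. t > 0 \<Longrightarrow> ((\<lambda>t. rho t * (f1 t + t * f2 t)) has_real_derivative
                       rho t * (2 * cos (2 * f t) / t^2 + 1) * (t * f1 t)) (at t)"
proof -
  obtain D where D0: "D 0 = f"
    and D_at: "\<And>n t. t > 0 \<Longrightarrow> (D n has_real_derivative D (Suc n) t) (at t)"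
    and D_at_0: "\<And>n. (D n has_real_derivative D (Suc n) 0) (at 0 within {0..})"
    using smooth_on_nonneg_obtain_derivatives[OF smooth] by blast
  have d0: "\<forall>t>0. (f has_real_derivative D 1 t) (at t)"
    using D_at[of _ 0] D0 by simp
  have d1: "\<forall>t>0. (D 1 has_real_derivative D 2 t) (at t)"
    using D_at[of _ 1] by (simp add: numeral_2_eq_2)
  have d2: "\<forall>t>0. (D 2 has_real_derivative D 3 t) (at t)"
    using D_at[of _ 2] by (simp add: numeral_2_eq_2 numeral_3_eq_3)
  have ode': "\<forall>t>0. D 2 t + (2/t - t/2) * D 1 t - sin (2 * f t) / t^2 = 0"
    using ode deriv_eq_of_has_real_derivative_on_pos[OF d0 d1] by simp
  have f_pos: "\<forall>t>0. 0 < f t"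
  proof (intro allI impI)
    fix t :: real assume "t > 0"
    with profile_ge[OF close this] div_sqrt_two_plus_sq_bounds(1)[OF this] show "0 < f t" by linarith
  qed
  have f_lt_pi: "\<forall>t>0. f t < pi" using profile_lt_pi[OF close] by blast
  have f_gt: "\<forall>t\<ge>1. pi/2 < f t" using profile_gt_pi_half[OF close] by blast
  have "\<not> antimono_on {0..} f"
  proof
    assume "antimono_on {0..} f"
    then have "f 1 \<le> f 0" by (rule monotone_onD) auto
    moreover have "0 < f 1" using f_pos by simp
    ultimately show False using f_0 by simp
  qed
  with mono have mono: "mono_on {0..} f" by blast
  show thesis
  proof (rule that)
    show "(D 1 has_real_derivative D 2 t) (at t)" if "t > 0" for t using d1 that by blast
    show "0 < D 1 t" if "t > 0" for t
      by (rule profile_deriv_pos[OF d0 d1 ode' mono f_pos f_lt_pi f_gt that])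
    show "((\<lambda>t. rho t * (D 1 t + t * D 2 t)) has_real_derivative
            rho t * (2 * cos (2 * f t) / t^2 + 1) * (t * D 1 t)) (at t)" if "t > 0" for t
      by (rule dilation_mode_flux_has_real_derivative[OF d0 d1 d2 ode' that])
    have "1/4 \<le> D 1 0" using profile_deriv_at_zero_ge[OF _ f_0 close] D_at_0[of 0] D0 by simp
    then show "0 < D 1 0" by simp
    show "(D 1 \<longlongrightarrow> D 1 0) (at_right 0)"
      using DERIV_continuous[OF D_at_0[of 1]] unfolding continuous_within
      by (rule tendsto_within_subset) auto
  qed
qed

lemma flux_has_real_derivative_of_eigen_eq:
  fixes W q :: "real \<Rightarrow> real"
  assumes "(\<lambda>t. rho t * deriv W t) differentiable (at t)"
    and "- (1 / rho t) * deriv (\<lambda>t. rho t * deriv W t) t + q t * W t = lam * W t" "t > 0"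
  shows "((\<lambda>t. rho t * deriv W t) has_real_derivative rho t * (q t - lam) * W t) (at t)"
proof -
  let ?F = "\<lambda>t. rho t * deriv W t"
  have "deriv ?F t / rho t = (q t - lam) * W t"
    using assms(2) by (simp add: algebra_simps)
  then have "deriv ?F t = rho t * (q t - lam) * W t"
    using rho_pos[OF assms(3)] by (simp add: divide_eq_eq mult_ac)
  moreover have "(?F has_real_derivative deriv ?F t) (at t)"
    using assms(1) DERIV_deriv_iff_real_differentiable by blast
  ultimately show ?thesis by simp
qed

lemma tendsto_div_self_at_right_0:
  fixes W :: "real \<Rightarrow> real"
  assumes "((\<lambda>y. (W y - y) / y) \<longlongrightarrow> 0) (at_right 0)"
  shows "((\<lambda>y. W y / y) \<longlongrightarrow> 1) (at_right 0)"
proof -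
  have "((\<lambda>y. (W y - y) / y + 1) \<longlongrightarrow> 1) (at_right 0)"
    using tendsto_add[OF assms tendsto_const, of 1] by simp
  moreover have "\<forall>\<^sub>F y in at_right 0. (W y - y) / y + 1 = W y / y"
    using eventually_at_right_less[of 0] by eventually_elim (simp add: field_simps)
  ultimately show ?thesis by (rule Lim_transform_eventually)
qed

theorem lemma4:
  fixes f0 :: "real \<Rightarrow> real" and lam :: real and W :: "real \<Rightarrow> real"
  assumes smooth: "smooth_on_nonneg f0"
    and mono: "mono_on {0..} f0 \<or> antimono_on {0..} f0"
    and ode: "\<forall>y>0. deriv (deriv f0) y + (2 / y - y / 2) * deriv f0 y
                 - sin (2 * f0 y) / y^2 = 0"
    and f0_0: "f0 0 = 0"
    and f0_lim: "\<exists>L. (f0 \<longlongrightarrow> L) at_top"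
    and close: "weighted_norm_le (\<lambda>y. f0 y - f0_approx y) (5 / 10^4)"
    and W_diff: "\<forall>y>0. W differentiable (at y)"
    and W_flux_diff: "\<forall>y>0. (\<lambda>t. rho t * deriv W t) differentiable (at y)"
    and W_eq: "\<forall>y>0. - (1 / rho y) * deriv (\<lambda>t. rho t * deriv W t) y
                 + 2 * cos (2 * f0 y) / y^2 * W y = lam * W y"
    and W_init: "((\<lambda>y. (W y - y) / y) \<longlongrightarrow> 0) (at_right 0)"
    and lam_le: "lam \<le> -1"
  shows "\<forall>y>0. W y \<noteq> 0"
proof (intro allI impI)
  fix y :: real assume "y > 0"
  obtain f1 f2 where f1: "\<And>t. t > 0 \<Longrightarrow> (f1 has_real_derivative f2 t) (at t)"
    and f1_pos: "\<And>t. t > 0 \<Longrightarrow> 0 < f1 t" and "0 < f1 0" and f1_tendsto: "(f1 \<longlongrightarrow> f1 0) (at_right 0)"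
    and g_flux: "\<And>t. t > 0 \<Longrightarrow> ((\<lambda>t. rho t * (f1 t + t * f2 t)) has_real_derivative
                       rho t * (2 * cos (2 * f0 t) / t^2 + 1) * (t * f1 t)) (at t)"
    using profile_dilation_mode[OF smooth mono ode f0_0 close] by blast
  have W: "(W has_real_derivative deriv W t) (at t)" if "t > 0" for t
    using W_diff that DERIV_deriv_iff_real_differentiable by blast
  have g: "((\<lambda>t. t * f1 t) has_real_derivative f1 t + t * f2 t) (at t)" if "t > 0" for t
    using f1[OF that] by (auto intro!: derivative_eq_intros)
  have W_flux: "((\<lambda>t. rho t * deriv W t) has_real_derivative
      rho t * (2 * cos (2 * f0 t) / t^2 - lam) * W t) (at t)" if "t > 0" for t
    using W_flux_diff W_eq that
    by (intro flux_has_real_derivative_of_eigen_eq[where q = "\<lambda>t. 2 * cos (2 * f0 t) / t^2"]) auto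
  have wronskian: "((\<lambda>t. rho t * (W t * (f1 t + t * f2 t) - deriv W t * (t * f1 t))) has_real_derivative
      (lam + 1) * rho t * W t * (t * f1 t)) (at t)" if "t > 0" for t
    using wronskian_has_real_derivative[where u = W and du = "deriv W" and v = "\<lambda>t. t * f1 t"
        and dv = "\<lambda>t. f1 t + t * f2 t" and y = t and p = rho
        and q = "\<lambda>t. 2 * cos (2 * f0 t) / t^2" and a = lam and b = "-1",
        OF W[OF that] g[OF that] W_flux[OF that]] g_flux[OF that]
    by simp
  have "\<forall>\<^sub>F t in at_right 0. f1 t = t * f1 t / t"
    using eventually_at_right_less[of 0] by eventually_elim simp
  with f1_tendsto have g_lin: "((\<lambda>t. t * f1 t / t) \<longlongrightarrow> f1 0) (at_right 0)"
    by (rule Lim_transform_eventually)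
  have rho_le: "rho t \<le> 1 * t^2" for t using rho_le_sq by simp
  show "W y \<noteq> 0"
    using lam_le f1_pos \<open>0 < f1 0\<close> \<open>y > 0\<close>
    by (intro sturm_comparison_no_zero_of_linear_at_0[OF W g _ rho_pos wronskian _
          tendsto_div_self_at_right_0[OF W_init] _ g_lin _ rho_le]) auto
qed

end
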